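(* The permutation representation $\alpha_{H_n^n}$ of $S_n\times S_n$ is isomorphic to the regular representation of $S_n\times S_n$.
   Context: Permutations are composed as functions, and $\pi\in S_n$ is identified with the $n\times n$ permutation matrix whose $(i,j)$ entry is $1$ iff $i=\pi(j)$. For $A\in GL_n(\mathbb{Z}_2)$ let $\eta(A)$ (resp. $\theta(A)$) be the partition obtained by sorting the row sums (resp. column sums) of $A$, computed as integers, in weakly decreasing order. $H_n^n=\{A\in GL_n(\mathbb{Z}_2)\mid \eta(A)=\theta(A)=(n,n-1,\dots,2,1)\}$. The group $S_n\times S_n$ acts on $H_n^n$ by $(\pi,\sigma)\bullet A=\pi A\sigma^{-1}$, and $\alpha_{H_n^n}$ denotes the associated complex permutation representation (on the vector space with basis $H_n^n$). *)

theory Defs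
  imports Complex_Main "HOL-Combinatorics.Permutations"
begin

text \<open>An n x n matrix over Z_2 is a function nat => nat => bool (True = 1),
  required to vanish outside the index range {0..<n} x {0..<n}.\<close>

definition mats :: "nat \<Rightarrow> (nat \<Rightarrow> nat \<Rightarrow> bool) set" where
  "mats n = {A. \<forall>i j. (n \<le> i \<or> n \<le> j) \<longrightarrow> \<not> A i j}"

definition mmult :: "nat \<Rightarrow> (nat \<Rightarrow> nat \<Rightarrow> bool) \<Rightarrow> (nat \<Rightarrow> nat \<Rightarrow> bool) \<Rightarrow> (nat \<Rightarrow> nat \<Rightarrow> bool)" where
  "mmult n A B = (\<lambda>i j. odd (card {k. k < n \<and> A i k \<and> B k j}))"

definition idm :: "nat \<Rightarrow> nat \<Rightarrow> nat \<Rightarrow> bool" where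
  "idm n = (\<lambda>i j. i < n \<and> i = j)"

definition GL2 :: "nat \<Rightarrow> (nat \<Rightarrow> nat \<Rightarrow> bool) set" where
  "GL2 n = {A \<in> mats n. \<exists>B \<in> mats n. mmult n A B = idm n \<and> mmult n B A = idm n}"

definition row_sum :: "nat \<Rightarrow> (nat \<Rightarrow> nat \<Rightarrow> bool) \<Rightarrow> nat \<Rightarrow> nat" where
  "row_sum n A i = card {j. j < n \<and> A i j}"

definition col_sum :: "nat \<Rightarrow> (nat \<Rightarrow> nat \<Rightarrow> bool) \<Rightarrow> nat \<Rightarrow> nat" where
  "col_sum n A j = card {i. i < n \<and> A i j}"

definition eta :: "nat \<Rightarrow> (nat \<Rightarrow> nat \<Rightarrow> bool) \<Rightarrow> nat list" where
  "eta n A = rev (sort (map (row_sum n A) [0..<n]))"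

definition theta :: "nat \<Rightarrow> (nat \<Rightarrow> nat \<Rightarrow> bool) \<Rightarrow> nat list" where
  "theta n A = rev (sort (map (col_sum n A) [0..<n]))"

definition stair :: "nat \<Rightarrow> nat list" where
  "stair n = rev [1..<Suc n]"

definition Hnn :: "nat \<Rightarrow> (nat \<Rightarrow> nat \<Rightarrow> bool) set" where
  "Hnn n = {A \<in> GL2 n. eta n A = stair n \<and> theta n A = stair n}"

definition SnSn :: "nat \<Rightarrow> ((nat \<Rightarrow> nat) \<times> (nat \<Rightarrow> nat)) set" where
  "SnSn n = {(p, s). p permutes {0..<n} \<and> s permutes {0..<n}}"

text \<open>(pi, sigma) . A = P_pi A P_sigma^{-1}, where P_pi has (i,j) entry 1 iff i = pi j.
  Entrywise: (P_pi A P_sigma^{-1}) i j = A (pi^{-1} i) (sigma^{-1} j).\<close>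
definition mat_act :: "(nat \<Rightarrow> nat) \<times> (nat \<Rightarrow> nat) \<Rightarrow> (nat \<Rightarrow> nat \<Rightarrow> bool) \<Rightarrow> (nat \<Rightarrow> nat \<Rightarrow> bool)" where
  "mat_act g A = (\<lambda>i j. A (inv (fst g) i) (inv (snd g) j))"

definition left_mult :: "(nat \<Rightarrow> nat) \<times> (nat \<Rightarrow> nat) \<Rightarrow> (nat \<Rightarrow> nat) \<times> (nat \<Rightarrow> nat) \<Rightarrow> (nat \<Rightarrow> nat) \<times> (nat \<Rightarrow> nat)" where
  "left_mult g h = (fst g \<circ> fst h, snd g \<circ> snd h)"

text \<open>The complex vector space with basis X: functions X -> C (vanishing off X).\<close>
definition fspace :: "'a set \<Rightarrow> ('a \<Rightarrow> complex) set" where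
  "fspace X = {f. \<forall>x. x \<notin> X \<longrightarrow> f x = 0}"

text \<open>Permutation operator of g: linear extension of e_x |-> e_{g.x}.\<close>
definition perm_op :: "'a set \<Rightarrow> ('g \<Rightarrow> 'a \<Rightarrow> 'a) \<Rightarrow> 'g \<Rightarrow> ('a \<Rightarrow> complex) \<Rightarrow> ('a \<Rightarrow> complex)" where
  "perm_op X act g f = (\<lambda>y. \<Sum>x\<in>{x \<in> X. act g x = y}. f x)"

definition perm_rep_iso :: "'g set \<Rightarrow> 'a set \<Rightarrow> ('g \<Rightarrow> 'a \<Rightarrow> 'a) \<Rightarrow> 'b set \<Rightarrow> ('g \<Rightarrow> 'b \<Rightarrow> 'b) \<Rightarrow> bool" where
  "perm_rep_iso G X actX Y actY \<longleftrightarrow>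
     (\<exists>T. bij_betw T (fspace X) (fspace Y)
        \<and> (\<forall>f\<in>fspace X. \<forall>h\<in>fspace X. \<forall>c::complex.
              T (\<lambda>x. c * f x + h x) = (\<lambda>y. c * T f y + T h y))
        \<and> (\<forall>g\<in>G. \<forall>f\<in>fspace X. T (perm_op X actX g f) = perm_op Y actY g (T f)))"

end

theory Submission
  imports Defs
begin

text \<open>A 0/1 matrix whose row sums and column sums are each a permutation of \<open>1, \<dots>, n\<close> is
  determined by them: entry \<open>(i, j)\<close> is 1 iff row sum \<open>i\<close> plus column sum \<open>j\<close> exceeds \<open>n\<close>.
  Hence every matrix in \<open>H_n^n\<close> arises from the lower triangular all-ones matrix by permuting
  rows and columns, and the row and column sums of the result recover both permutations. So
  \<open>S_n \<times> S_n\<close> acts simply transitively on \<open>H_n^n\<close>, \<open>g \<mapsto> g \<bullet> staircase\<close> is an equivariant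
  bijection from the left regular action, and pulling functions back along it intertwines the
  two permutation representations.\<close>

lemma card_filter_permutes:
  assumes "q permutes S"
  shows "card {k\<in>S. P (q k)} = card {k\<in>S. P k}"
proof (rule bij_betw_same_card, rule bij_betw_subset[OF permutes_imp_bij[OF assms]])
  show "q ` {k\<in>S. P (q k)} = {k\<in>S. P k}"
  proof (intro equalityI subsetI)
    fix k assume "k \<in> {k\<in>S. P k}"
    then have "inv q k \<in> {k\<in>S. P (q k)}" and "k = q (inv q k)"
      using permutes_inverses(1)[OF assms] permutes_in_image[OF permutes_inv[OF assms]] by auto
    then show "k \<in> q ` {k\<in>S. P (q k)}" by blast
  qed (auto simp: permutes_in_image[OF assms])
qed auto

lemma sort_map_permutes:
  assumes "q permutes {0..<n}"
  shows "sort (map (f \<circ> q) [0..<n]) = sort (map f [0..<n])"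
proof -
  have "image_mset (f \<circ> q) (mset_set {0..<n}) = image_mset f (mset_set {0..<n})"
    using permutes_implies_image_mset_eq[OF assms, of "f \<circ> q" f] by simp
  then have "mset (map f [0..<n]) = mset (map (f \<circ> q) [0..<n])"
    by (simp add: mset_map mset_upt)
  then show ?thesis
    by (intro properties_for_sort) simp_all
qed

lemma row_sum_mat_act:
  assumes "s permutes {0..<n}"
  shows "row_sum n (mat_act (p, s) A) = row_sum n A \<circ> inv p"
proof
  fix i
  show "row_sum n (mat_act (p, s) A) i = (row_sum n A \<circ> inv p) i"
    using card_filter_permutes[OF permutes_inv[OF assms], of "A (inv p i)"]
    by (simp add: row_sum_def mat_act_def)
qed

lemma col_sum_mat_act:
  assumes "p permutes {0..<n}"
  shows "col_sum n (mat_act (p, s) A) = col_sum n A \<circ> inv s"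
proof
  fix j
  show "col_sum n (mat_act (p, s) A) j = (col_sum n A \<circ> inv s) j"
    using card_filter_permutes[OF permutes_inv[OF assms], of "\<lambda>i. A i (inv s j)"]
    by (simp add: col_sum_def mat_act_def)
qed

lemma eta_mat_act:
  assumes "p permutes {0..<n}" "s permutes {0..<n}"
  shows "eta n (mat_act (p, s) A) = eta n A"
  using sort_map_permutes[OF permutes_inv[OF assms(1)]]
  by (simp add: eta_def row_sum_mat_act[OF assms(2)])

lemma theta_mat_act:
  assumes "p permutes {0..<n}" "s permutes {0..<n}"
  shows "theta n (mat_act (p, s) A) = theta n A"
  using sort_map_permutes[OF permutes_inv[OF assms(2)]]
  by (simp add: theta_def col_sum_mat_act[OF assms(1)])

lemma mats_mat_act:
  assumes "p permutes {0..<n}" "s permutes {0..<n}" "A \<in> mats n"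
  shows "mat_act (p, s) A \<in> mats n"
  using assms permutes_in_image[OF permutes_inv[OF assms(1)]]
    permutes_in_image[OF permutes_inv[OF assms(2)]]
  by (auto simp: mats_def mat_act_def not_less[symmetric])

lemma mmult_mat_act:
  assumes "s permutes {0..<n}"
  shows "mmult n (mat_act (p, s) A) (mat_act (s, q) B) = mat_act (p, q) (mmult n A B)"
proof (intro ext)
  fix i j
  show "mmult n (mat_act (p, s) A) (mat_act (s, q) B) i j = mat_act (p, q) (mmult n A B) i j"
    using card_filter_permutes[OF permutes_inv[OF assms], of "\<lambda>k. A (inv p i) k \<and> B k (inv q j)"]
    by (simp add: mmult_def mat_act_def)
qed

lemma idm_mat_act:
  assumes "p permutes {0..<n}"
  shows "mat_act (p, p) (idm n) = idm n"
  using permutes_in_image[OF permutes_inv[OF assms]] permutes_inj[OF permutes_inv[OF assms]]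
  by (auto simp: mat_act_def idm_def fun_eq_iff dest: injD)

lemma GL2_mat_act:
  assumes p: "p permutes {0..<n}" and s: "s permutes {0..<n}" and "A \<in> GL2 n"
  shows "mat_act (p, s) A \<in> GL2 n"
proof -
  obtain B where A: "A \<in> mats n" and B: "B \<in> mats n"
    and AB: "mmult n A B = idm n" and BA: "mmult n B A = idm n"
    using \<open>A \<in> GL2 n\<close> by (auto simp: GL2_def)
  have "mmult n (mat_act (p, s) A) (mat_act (s, p) B) = idm n"
    by (simp add: mmult_mat_act[OF s] AB idm_mat_act[OF p])
  moreover have "mmult n (mat_act (s, p) B) (mat_act (p, s) A) = idm n"
    by (simp add: mmult_mat_act[OF p] BA idm_mat_act[OF s])
  ultimately show ?thesis
    unfolding GL2_def using mats_mat_act[OF p s A] mats_mat_act[OF s p B] by blast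
qed

lemma Hnn_mat_act:
  assumes "p permutes {0..<n}" "s permutes {0..<n}" "A \<in> Hnn n"
  shows "mat_act (p, s) A \<in> Hnn n"
  using assms by (simp add: Hnn_def GL2_mat_act eta_mat_act theta_mat_act)

lemma mat_act_left_mult:
  assumes "g \<in> SnSn n" "h \<in> SnSn n"
  shows "mat_act g (mat_act h A) = mat_act (left_mult g h) A"
  using assms by (auto simp: SnSn_def mat_act_def left_mult_def o_inv_distrib permutes_bij)

definition staircase :: "nat \<Rightarrow> nat \<Rightarrow> nat \<Rightarrow> bool" where
  "staircase n = (\<lambda>i j. i < n \<and> j \<le> i)"

lemma staircase_GL2: "staircase n \<in> GL2 n"
proof -
  define B where "B = (\<lambda>i j. i < n \<and> j < n \<and> (j = i \<or> Suc j = i))"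
  have "{k. k < n \<and> staircase n i k \<and> B k j} =
        (if i < n \<and> j < n then if j = i then {i} else if j < i then {j, Suc j} else {} else {})"
    for i j by (auto simp: staircase_def B_def)
  then have "mmult n (staircase n) B = idm n"
    by (auto simp: mmult_def idm_def fun_eq_iff)
  moreover have "{k. k < n \<and> B i k \<and> staircase n k j} =
        (if i < n \<and> j < n then if j = i then {i} else if j < i then {i, i - 1} else {} else {})"
    for i j by (auto simp: staircase_def B_def)
  then have "mmult n B (staircase n) = idm n"
    by (auto simp: mmult_def idm_def fun_eq_iff)
  moreover have "staircase n \<in> mats n" "B \<in> mats n"
    by (auto simp: mats_def staircase_def B_def)
  ultimately show ?thesis
    unfolding GL2_def by blast
qed

lemma row_sum_staircase: "i < n \<Longrightarrow> row_sum n (staircase n) i = Suc i"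
proof -
  assume "i < n"
  then have "{j. j < n \<and> staircase n i j} = {0..i}" by (auto simp: staircase_def)
  then show ?thesis by (simp add: row_sum_def)
qed

lemma col_sum_staircase: "j < n \<Longrightarrow> col_sum n (staircase n) j = n - j"
proof -
  assume "j < n"
  then have "{i. i < n \<and> staircase n i j} = {j..<n}" by (auto simp: staircase_def)
  then show ?thesis by (simp add: col_sum_def)
qed

lemma eta_staircase: "eta n (staircase n) = stair n"
proof -
  have "map (row_sum n (staircase n)) [0..<n] = [1..<Suc n]"
    by (simp add: row_sum_staircase map_Suc_upt[symmetric] del: upt_Suc)
  then show ?thesis
    by (simp add: eta_def stair_def del: upt_Suc)
qed

lemma theta_staircase: "theta n (staircase n) = stair n"
proof -
  have "map (col_sum n (staircase n)) [0..<n] = rev [1..<Suc n]"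
    by (rule nth_equalityI) (auto simp: col_sum_staircase rev_nth simp del: upt_Suc)
  moreover have "sort (rev [1..<Suc n]) = [1..<Suc n]"
    by (rule properties_for_sort) (simp_all del: upt_Suc)
  ultimately show ?thesis
    by (simp add: theta_def stair_def del: upt_Suc)
qed

lemma staircase_Hnn: "staircase n \<in> Hnn n"
  by (simp add: Hnn_def staircase_GL2 eta_staircase theta_staircase)

section \<open>0/1 matrices whose row and column sums are \<open>1, \<dots>, N\<close>\<close>

lemma full_row_and_single_entry_column:
  fixes A :: "'a \<Rightarrow> 'b \<Rightarrow> bool"
  assumes rows: "bij_betw (\<lambda>i. card {j\<in>J. A i j}) I {1..N}"
    and cols: "bij_betw (\<lambda>j. card {i\<in>I. A i j}) J {1..N}"
    and "0 < N"
  obtains i0 j0 where "i0 \<in> I" "card {j\<in>J. A i0 j} = N" "\<And>j. j \<in> J \<Longrightarrow> A i0 j"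
    and "j0 \<in> J" "card {i\<in>I. A i j0} = 1" "\<And>i. i \<in> I \<Longrightarrow> A i j0 \<longleftrightarrow> i = i0"
proof -
  have "N \<in> (\<lambda>i. card {j\<in>J. A i j}) ` I" "1 \<in> (\<lambda>j. card {i\<in>I. A i j}) ` J"
    using rows cols \<open>0 < N\<close> by (simp_all add: bij_betw_def)
  then obtain i0 j0 where i0: "i0 \<in> I" "card {j\<in>J. A i0 j} = N"
    and j0: "j0 \<in> J" "card {i\<in>I. A i j0} = 1"
    by (auto simp: image_iff)
  have "finite J" "card J = N"
    using bij_betw_finite[OF cols] bij_betw_same_card[OF cols] by simp_all
  then have "{j\<in>J. A i0 j} = J"
    using i0(2) by (intro card_subset_eq) auto
  then have full: "A i0 j" if "j \<in> J" for j
    using that by blast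
  obtain x where "{i\<in>I. A i j0} = {x}"
    using j0(2) by (auto simp: card_1_singleton_iff)
  moreover have "i0 \<in> {i\<in>I. A i j0}"
    using i0(1) j0(1) full by blast
  ultimately have "A i j0 \<longleftrightarrow> i = i0" if "i \<in> I" for i
    using that by (metis (mono_tags, lifting) mem_Collect_eq singletonD singletonI)
  with that i0 j0 full show ?thesis
    by blast
qed

lemma card_filter_Diff_singleton:
  assumes "finite S"
  shows "card {x\<in>S - {a}. P x} = card {x\<in>S. P x} - (if a \<in> S \<and> P a then 1 else 0)"
proof -
  have "{x\<in>S - {a}. P x} = {x\<in>S. P x} - {a}"
    by auto
  then show ?thesis
    using assms by (simp add: card_Diff_singleton_if)
qed

lemma bij_betw_remove_top:
  assumes "bij_betw f A {1..Suc N}" "a \<in> A" "f a = Suc N"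
    and "\<And>x. x \<in> A - {a} \<Longrightarrow> g x = f x"
  shows "bij_betw g (A - {a}) {1..N}"
proof -
  have "bij_betw f (A - {a}) ({1..Suc N} - {Suc N})"
    using assms(1-3) by (intro bij_betw_DiffI) auto
  then show ?thesis
    using assms(4) by (subst bij_betw_cong[where g = f]) (simp_all add: atLeastAtMostSuc_conv)
qed

lemma bij_betw_remove_bottom_shift:
  assumes "bij_betw f A {1..Suc N}" "a \<in> A" "f a = 1"
    and "\<And>x. x \<in> A - {a} \<Longrightarrow> g x = f x - 1"
  shows "bij_betw g (A - {a}) {1..N}"
proof -
  have "bij_betw f (A - {a}) ({1..Suc N} - {1})"
    using assms(1-3) by (intro bij_betw_DiffI) auto
  moreover have "bij_betw (\<lambda>x. x - 1) ({1..Suc N} - {1}) {1..N}"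
    by (rule bij_betw_byWitness[where f' = Suc]) auto
  ultimately show ?thesis
    using assms(4) by (subst bij_betw_cong[where g = "(\<lambda>x. x - 1) \<circ> f"]) (auto intro: bij_betw_trans)
qed

text \<open>Induction on \<open>N\<close>: the row with sum \<open>N\<close> is full, so the column with sum 1 meets it
  in its only entry; deleting that row and column leaves a matrix of the same kind for \<open>N - 1\<close>.\<close>

lemma entry_iff_sums_gt:
  fixes A :: "'a \<Rightarrow> 'b \<Rightarrow> bool"
  assumes "bij_betw (\<lambda>i. card {j\<in>J. A i j}) I {1..N}"
    and "bij_betw (\<lambda>j. card {i\<in>I. A i j}) J {1..N}"
    and "i \<in> I" "j \<in> J"
  shows "A i j \<longleftrightarrow> N < card {j\<in>J. A i j} + card {i\<in>I. A i j}"
  using assms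
proof (induction N arbitrary: I J i j)
  case 0
  then show ?case
    by (auto simp: bij_betw_def)
next
  case (Suc N)
  define rs where "rs K = (\<lambda>i. card {j\<in>K. A i j})" for K :: "'b set"
  define cs where "cs K = (\<lambda>j. card {i\<in>K. A i j})" for K :: "'a set"
  have rows: "bij_betw (rs J) I {1..Suc N}" and cols: "bij_betw (cs I) J {1..Suc N}"
    using Suc.prems by (simp_all add: rs_def cs_def)
  obtain i0 j0 where i0: "i0 \<in> I" "rs J i0 = Suc N" "\<And>j. j \<in> J \<Longrightarrow> A i0 j"
    and j0: "j0 \<in> J" "cs I j0 = 1" "\<And>i. i \<in> I \<Longrightarrow> A i j0 \<longleftrightarrow> i = i0"
    using full_row_and_single_entry_column[OF Suc.prems(1,2)] unfolding rs_def cs_def by blast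
  have fin: "finite I" "finite J"
    using bij_betw_finite[OF rows] bij_betw_finite[OF cols] by simp_all
  have rs': "rs (J - {j0}) i = rs J i" if "i \<in> I - {i0}" for i
    using that j0 card_filter_Diff_singleton[OF fin(2)] by (simp add: rs_def)
  have cs': "cs (I - {i0}) j = cs I j - 1" if "j \<in> J - {j0}" for j
    using that i0 card_filter_Diff_singleton[OF fin(1)] by (simp add: cs_def)
  have rows': "bij_betw (rs (J - {j0})) (I - {i0}) {1..N}"
    using bij_betw_remove_top[OF rows i0(1,2)] rs' by blast
  have cols': "bij_betw (cs (I - {i0})) (J - {j0}) {1..N}"
    using bij_betw_remove_bottom_shift[OF cols j0(1,2)] cs' by blast
  have "1 \<le> cs I j" "rs J i \<le> Suc N"
    using rows cols Suc.prems(3,4) by (auto simp: bij_betw_def)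
  consider "i = i0" | "i \<noteq> i0" "j = j0" | "i \<in> I - {i0}" "j \<in> J - {j0}"
    using Suc.prems(3,4) by blast
  then have "A i j \<longleftrightarrow> Suc N < rs J i + cs I j"
  proof cases
    case 1
    then show ?thesis
      using i0 \<open>1 \<le> cs I j\<close> Suc.prems(4) by simp
  next
    case 2
    then have "rs J i \<noteq> Suc N"
      using rows i0(1,2) Suc.prems(3) by (metis bij_betw_def inj_onD)
    then show ?thesis
      using 2 j0 \<open>rs J i \<le> Suc N\<close> Suc.prems(3) by simp
  next
    case 3
    then have "A i j \<longleftrightarrow> N < rs (J - {j0}) i + cs (I - {i0}) j"
      using Suc.IH[OF rows'[unfolded rs_def] cols'[unfolded cs_def]] by (simp add: rs_def cs_def)
    then show ?thesis
      using 3 rs' cs' \<open>1 \<le> cs I j\<close> by auto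
  qed
  then show ?case
    by (simp add: rs_def cs_def)
qed

section \<open>\<open>H_n^n\<close> is a regular orbit\<close>

lemma permutes_restrict_bij:
  assumes "bij_betw f S S"
  shows "(\<lambda>x. if x \<in> S then f x else x) permutes S"
proof (rule bij_imp_permutes)
  show "bij_betw (\<lambda>x. if x \<in> S then f x else x) S S"
    by (subst bij_betw_cong[where g = f]) (simp_all add: assms)
qed simp

lemma bij_betw_of_sort_eq_stair:
  assumes "rev (sort (map f [0..<n])) = stair n"
  shows "bij_betw f {0..<n} {1..n}"
proof -
  have "sort (map f [0..<n]) = [1..<Suc n]"
    using assms by (simp add: stair_def del: upt_Suc)
  then have m: "mset (map f [0..<n]) = mset [1..<Suc n]"
    by (metis mset_sort)
  have "distinct (map f [0..<n])"
    using mset_eq_imp_distinct_iff[OF m] by simp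
  moreover have "f ` {0..<n} = {1..n}"
    using arg_cong[OF m, of set_mset] by (simp del: upt_Suc add: atLeastLessThanSuc_atLeastAtMost)
  ultimately show ?thesis
    by (simp add: bij_betw_def distinct_map)
qed

lemma Hnn_sums_bij:
  assumes "A \<in> Hnn n"
  shows "bij_betw (row_sum n A) {0..<n} {1..n}" "bij_betw (col_sum n A) {0..<n} {1..n}"
  using assms bij_betw_of_sort_eq_stair unfolding Hnn_def eta_def theta_def by blast+

lemma Hnn_entry_iff:
  assumes "A \<in> Hnn n" "i < n" "j < n"
  shows "A i j \<longleftrightarrow> n < row_sum n A i + col_sum n A j"
proof -
  have rs: "row_sum n A = (\<lambda>i. card {j\<in>{0..<n}. A i j})"
    and cs: "col_sum n A = (\<lambda>j. card {i\<in>{0..<n}. A i j})"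
    by (simp_all add: fun_eq_iff row_sum_def col_sum_def)
  have "A i j \<longleftrightarrow> n < card {j\<in>{0..<n}. A i j} + card {i\<in>{0..<n}. A i j}"
    using Hnn_sums_bij[OF assms(1), unfolded rs cs] assms(2,3) by (intro entry_iff_sums_gt) auto
  then show ?thesis
    by (simp add: rs cs)
qed

lemma Hnn_in_orbit_staircase:
  assumes "A \<in> Hnn n"
  shows "\<exists>g\<in>SnSn n. A = mat_act g (staircase n)"
proof -
  note rows = Hnn_sums_bij(1)[OF assms] and cols = Hnn_sums_bij(2)[OF assms]
  \<comment> \<open>the row with sum \<open>k\<close> comes from staircase row \<open>k - 1\<close>, the column with sum \<open>k\<close> from column \<open>n - k\<close>\<close>
  define r where "r = (\<lambda>i. if i \<in> {0..<n} then row_sum n A i - 1 else i)"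
  define c where "c = (\<lambda>j. if j \<in> {0..<n} then n - col_sum n A j else j)"
  have "bij_betw (\<lambda>x. x - 1) {1..n} {0..<n}" "bij_betw (\<lambda>x. n - x) {1..n} {0..<n}"
    by (rule bij_betw_byWitness[where f' = Suc]; force)
       (rule bij_betw_byWitness[where f' = "\<lambda>x. n - x"]; force)
  then have "bij_betw (\<lambda>i. row_sum n A i - 1) {0..<n} {0..<n}"
    and "bij_betw (\<lambda>j. n - col_sum n A j) {0..<n} {0..<n}"
    using bij_betw_trans[OF rows] bij_betw_trans[OF cols] by (simp_all add: comp_def)
  then have r: "r permutes {0..<n}" and c: "c permutes {0..<n}"
    unfolding r_def c_def by (simp_all only: permutes_restrict_bij)
  have "mat_act (inv r, inv c) (staircase n) = A"
  proof (intro ext)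
    fix i j
    have "mat_act (inv r, inv c) (staircase n) i j = staircase n (r i) (c j)"
      by (simp add: mat_act_def permutes_inv_inv[OF r] permutes_inv_inv[OF c])
    also have "\<dots> = A i j"
    proof (cases "i < n \<and> j < n")
      case True
      then have "1 \<le> row_sum n A i" "row_sum n A i \<le> n" "1 \<le> col_sum n A j" "col_sum n A j \<le> n"
        using rows cols by (auto simp: bij_betw_def)
      then show ?thesis
        using True Hnn_entry_iff[OF assms] by (auto simp: staircase_def r_def c_def)
    next
      case False
      then show ?thesis
        using assms by (auto simp: staircase_def r_def c_def Hnn_def GL2_def mats_def)
    qed
    finally show "mat_act (inv r, inv c) (staircase n) i j = A i j" .
  qed
  moreover have "(inv r, inv c) \<in> SnSn n"
    using r c by (simp add: SnSn_def permutes_inv)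
  ultimately show ?thesis
    by metis
qed

lemma inv_fst_from_mat_act_staircase:
  assumes "(p, s) \<in> SnSn n"
  shows "inv p = (\<lambda>i. if i < n then row_sum n (mat_act (p, s) (staircase n)) i - 1 else i)"
proof
  fix i
  have p: "inv p permutes {0..<n}" and s: "s permutes {0..<n}"
    using assms by (simp_all add: SnSn_def permutes_inv)
  show "inv p i = (if i < n then row_sum n (mat_act (p, s) (staircase n)) i - 1 else i)"
  proof (cases "i < n")
    case True
    then have "inv p i < n"
      using permutes_in_image[OF p] by simp
    then show ?thesis
      using True by (simp add: row_sum_mat_act[OF s] row_sum_staircase)
  qed (simp add: permutes_not_in[OF p])
qed

lemma inv_snd_from_mat_act_staircase:
  assumes "(p, s) \<in> SnSn n"
  shows "inv s = (\<lambda>j. if j < n then n - col_sum n (mat_act (p, s) (staircase n)) j else j)"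
proof
  fix j
  have p: "p permutes {0..<n}" and s: "inv s permutes {0..<n}"
    using assms by (simp_all add: SnSn_def permutes_inv)
  show "inv s j = (if j < n then n - col_sum n (mat_act (p, s) (staircase n)) j else j)"
  proof (cases "j < n")
    case True
    then have "inv s j < n"
      using permutes_in_image[OF s] by simp
    then show ?thesis
      using True by (simp add: col_sum_mat_act[OF p] col_sum_staircase)
  qed (simp add: permutes_not_in[OF s])
qed

lemma inj_on_mat_act_staircase: "inj_on (\<lambda>g. mat_act g (staircase n)) (SnSn n)"
proof (rule inj_onI, clarify)
  fix p s p' s'
  assume g: "(p, s) \<in> SnSn n" and g': "(p', s') \<in> SnSn n"
    and eq: "mat_act (p, s) (staircase n) = mat_act (p', s') (staircase n)"
  have "inv p = inv p'"
    unfolding inv_fst_from_mat_act_staircase[OF g] inv_fst_from_mat_act_staircase[OF g'] eq ..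
  moreover have "inv s = inv s'"
    unfolding inv_snd_from_mat_act_staircase[OF g] inv_snd_from_mat_act_staircase[OF g'] eq ..
  moreover have "p permutes {0..<n}" "p' permutes {0..<n}" "s permutes {0..<n}" "s' permutes {0..<n}"
    using g g' by (simp_all add: SnSn_def)
  ultimately show "p = p' \<and> s = s'"
    by (metis permutes_inv_inv)
qed

lemma bij_betw_mat_act_staircase: "bij_betw (\<lambda>g. mat_act g (staircase n)) (SnSn n) (Hnn n)"
proof -
  have "mat_act g (staircase n) \<in> Hnn n" if "g \<in> SnSn n" for g
    using that Hnn_mat_act[OF _ _ staircase_Hnn] by (auto simp: SnSn_def)
  then have "(\<lambda>g. mat_act g (staircase n)) ` SnSn n = Hnn n"
    using Hnn_in_orbit_staircase by blast
  then show ?thesis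
    using inj_on_mat_act_staircase by (simp add: bij_betw_def)
qed

lemma bij_betw_fspace_pullback:
  assumes "bij_betw \<Phi> Y X"
  shows "bij_betw (\<lambda>f y. if y \<in> Y then f (\<Phi> y) else 0) (fspace X) (fspace Y)"
proof (rule bij_betw_byWitness[where f' = "\<lambda>u x. if x \<in> X then u (inv_into Y \<Phi> x) else 0"])
  have inj: "inj_on \<Phi> Y" and img: "\<Phi> ` Y = X"
    using assms by (simp_all add: bij_betw_def)
  show "\<forall>f\<in>fspace X. (\<lambda>x. if x \<in> X then (if inv_into Y \<Phi> x \<in> Y then f (\<Phi> (inv_into Y \<Phi> x)) else 0) else 0) = f"
    using img by (auto simp: fspace_def fun_eq_iff f_inv_into_f inv_into_into)
  show "\<forall>u\<in>fspace Y. (\<lambda>y. if y \<in> Y then (if \<Phi> y \<in> X then u (inv_into Y \<Phi> (\<Phi> y)) else 0) else 0) = u"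
    using inj img by (auto simp: fspace_def fun_eq_iff)
qed (auto simp: fspace_def)

lemma perm_op_pullback:
  assumes bij: "bij_betw \<Phi> Y X"
    and closed: "\<And>y. y \<in> Y \<Longrightarrow> actY g y \<in> Y"
    and equivariant: "\<And>y. y \<in> Y \<Longrightarrow> actX g (\<Phi> y) = \<Phi> (actY g y)"
  shows "(\<lambda>y. if y \<in> Y then perm_op X actX g f (\<Phi> y) else 0)
       = perm_op Y actY g (\<lambda>y. if y \<in> Y then f (\<Phi> y) else 0)"
proof
  fix y
  have inj: "inj_on \<Phi> Y" and img: "\<Phi> ` Y = X"
    using bij by (simp_all add: bij_betw_def)
  show "(if y \<in> Y then perm_op X actX g f (\<Phi> y) else 0)
      = perm_op Y actY g (\<lambda>y. if y \<in> Y then f (\<Phi> y) else 0) y"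
  proof (cases "y \<in> Y")
    case True
    have "actX g (\<Phi> k) = \<Phi> y \<longleftrightarrow> actY g k = y" if "k \<in> Y" for k
      using that True closed equivariant inj by (metis inj_onD)
    then have "bij_betw \<Phi> {k \<in> Y. actY g k = y} {x \<in> X. actX g x = \<Phi> y}"
      using inj img by (auto simp: bij_betw_def intro: inj_on_subset)
    then have "(\<Sum>x\<in>{x \<in> X. actX g x = \<Phi> y}. f x) = (\<Sum>k\<in>{k \<in> Y. actY g k = y}. f (\<Phi> k))"
      by (simp add: sum.reindex_bij_betw)
    then show ?thesis
      using True by (simp add: perm_op_def)
  next
    case False
    then have "{k \<in> Y. actY g k = y} = {}"
      using closed by auto
    with False show ?thesis
      unfolding perm_op_def by (simp only: if_False sum.empty)
  qed
qed

lemma perm_rep_iso_of_equivariant_bij: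
  assumes bij: "bij_betw \<Phi> Y X"
    and closed: "\<And>g y. g \<in> G \<Longrightarrow> y \<in> Y \<Longrightarrow> actY g y \<in> Y"
    and equivariant: "\<And>g y. g \<in> G \<Longrightarrow> y \<in> Y \<Longrightarrow> actX g (\<Phi> y) = \<Phi> (actY g y)"
  shows "perm_rep_iso G X actX Y actY"
  unfolding perm_rep_iso_def
proof (intro exI conjI ballI allI)
  let ?T = "\<lambda>f y. if y \<in> Y then f (\<Phi> y) else (0::complex)"
  show "bij_betw ?T (fspace X) (fspace Y)"
    using bij by (rule bij_betw_fspace_pullback)
  show "?T (\<lambda>x. c * f x + h x) = (\<lambda>y. c * ?T f y + ?T h y)" for f h c
    by auto
  show "?T (perm_op X actX g f) = perm_op Y actY g (?T f)" if "g \<in> G" for g f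
    using perm_op_pullback[where actX = actX and actY = actY and g = g] bij closed equivariant that
    by blast
qed

theorem mainTheorem2:
  fixes n :: nat
  shows "perm_rep_iso (SnSn n) (Hnn n) mat_act (SnSn n) left_mult"
proof (rule perm_rep_iso_of_equivariant_bij[OF bij_betw_mat_act_staircase])
  show "left_mult g h \<in> SnSn n" if "g \<in> SnSn n" "h \<in> SnSn n" for g h
    using that by (auto simp: SnSn_def left_mult_def intro: permutes_compose)
  show "mat_act g (mat_act h (staircase n)) = mat_act (left_mult g h) (staircase n)"
    if "g \<in> SnSn n" "h \<in> SnSn n" for g h
    using that by (rule mat_act_left_mult)
qed

end
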